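(* For every set of formulas $\Gamma$ and formula $\alpha$: if $\Gamma \vDash_{\bf Km} \alpha$ then there exists a finite subset $\Gamma_0\subseteq\Gamma$ such that $\Gamma_0 \vDash_{\bf Km} \alpha$.
   Context: Formulas are built from a denumerable set of propositional variables by the unary connectives $\neg$, $\Box$ and the binary connective $\to$; $For$ is the set of all formulas. Nmatrix semantics: an Nmatrix has a domain $A$, a set $D\subseteq A$ of designated values and, for each connective, a multioperation assigning to each tuple of arguments a nonempty subset of $A$. A valuation is a map $v:For\to A$ with $v(\neg\alpha)\in\tilde\neg(v(\alpha))$, $v(\Box\alpha)\in\tilde\Box(v(\alpha))$, $v(\alpha\to\beta)\in v(\alpha)\tilde\to v(\beta)$. $\Gamma\vDash\alpha$ iff every valuation $v$ with $v(\gamma)\in D$ for all $\gamma\in\Gamma$ has $v(\alpha)\in D$. The Nmatrix for ${\bf Km}$ (consequence $\vDash_{\bf Km}$): domain $\{T^+,C^+,F^+,I^+,T^-,C^-,F^-,I^-\}$, designated set $+=\{T^+,C^+,F^+,I^+\}$, and $-=\{T^-,C^-,F^-,I^-\}$. Negation: $\tilde\neg T^+=\{F^-\}$, $\tilde\neg C^+=\{C^-\}$, $\tilde\neg F^+=\{T^-\}$, $\tilde\neg I^+=\{I^-\}$, $\tilde\neg T^-=\{F^+\}$, $\tilde\neg C^-=\{C^+\}$, $\tilde\neg F^-=\{T^+\}$, $\tilde\neg I^-=\{I^+\}$. Necessity: $\tilde\Box x=+$ if $x\in\{T^+,T^-,I^+,I^-\}$, and $\tilde\Box x=-$ otherwise.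 Implication (row $x$, column $y$ gives $x\tilde\to y$): $$\begin{array}{c|cccccccc} \to & T^+ & C^+ & F^+ & I^+ & T^- & C^- & F^- & I^-\\\hline T^+ & \{T^+\}&\{C^+\}&\{F^+\}&\{I^+\}&\{T^-\}&\{C^-\}&\{F^-\}&\{I^-\}\\ C^+ & \{T^+\}&\{T^+,C^+\}&\{C^+\}&\{I^+\}&\{T^-\}&\{T^-,C^-\}&\{C^-\}&\{I^-\}\\ F^+ & \{T^+\}&\{T^+\}&\{T^+\}&\{I^+\}&\{T^-\}&\{T^-\}&\{T^-\}&\{I^-\}\\ I^+ & \{I^+\}&\{I^+\}&\{I^+\}&\{I^+\}&\{I^-\}&\{I^-\}&\{I^-\}&\{I^-\}\\ T^- & \{T^+\}&\{C^+\}&\{F^+\}&\{I^+\}&\{T^+\}&\{C^+\}&\{F^+\}&\{I^+\}\\ C^- & \{T^+\}&\{T^+,C^+\}&\{C^+\}&\{I^+\}&\{T^+\}&\{T^+,C^+\}&\{C^+\}&\{I^+\}\\ F^- & \{T^+\}&\{T^+\}&\{T^+\}&\{I^+\}&\{T^+\}&\{T^+\}&\{T^+\}&\{I^+\}\\ I^- & \{I^+\}&\{I^+\}&\{I^+\}&\{I^+\}&\{I^+\}&\{I^+\}&\{I^+\}&\{I^+\}\end{array}$$ *)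

theory Defs
  imports Main
begin

datatype form = Var nat | Neg form | Box form | Imp form form

text \<open>Truth values of the Nmatrix for Km: T,C,F,I with polarity + / -.\<close>
datatype base = T | C | F | I
datatype val = Pos base | Ngt base

definition designated :: "val set" where
  "designated = {Pos T, Pos C, Pos F, Pos I}"

definition undesignated :: "val set" where
  "undesignated = {Ngt T, Ngt C, Ngt F, Ngt I}"

fun neg_swap :: "base \<Rightarrow> base" where
  "neg_swap T = F" | "neg_swap C = C" | "neg_swap F = T" | "neg_swap I = I"

fun negKm :: "val \<Rightarrow> val set" where
  "negKm (Pos b) = {Ngt (neg_swap b)}"
| "negKm (Ngt b) = {Pos (neg_swap b)}"

fun base_of :: "val \<Rightarrow> base" where
  "base_of (Pos b) = b" | "base_of (Ngt b) = b"

definition boxKm :: "val \<Rightarrow> val set" where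
  "boxKm x = (if base_of x \<in> {T, I} then designated else undesignated)"

fun imp_base :: "base \<Rightarrow> base \<Rightarrow> base set" where
  "imp_base T y = {y}"
| "imp_base C T = {T}" | "imp_base C C = {T, C}" | "imp_base C F = {C}" | "imp_base C I = {I}"
| "imp_base F I = {I}" | "imp_base F _ = {T}"
| "imp_base I _ = {I}"

fun impKm :: "val \<Rightarrow> val \<Rightarrow> val set" where
  "impKm (Pos a) (Pos b) = Pos ` imp_base a b"
| "impKm (Pos a) (Ngt b) = Ngt ` imp_base a b"
| "impKm (Ngt a) y = Pos ` imp_base a (base_of y)"

definition valuation :: "(form \<Rightarrow> val) \<Rightarrow> bool" where
  "valuation v \<longleftrightarrow>
     (\<forall>\<alpha>. v (Neg \<alpha>) \<in> negKm (v \<alpha>)) \<and>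
     (\<forall>\<alpha>. v (Box \<alpha>) \<in> boxKm (v \<alpha>)) \<and>
     (\<forall>\<alpha> \<beta>. v (Imp \<alpha> \<beta>) \<in> impKm (v \<alpha>) (v \<beta>))"

definition consKm :: "form set \<Rightarrow> form \<Rightarrow> bool" (infix "\<Turnstile>Km" 50) where
  "\<Gamma> \<Turnstile>Km \<alpha> \<longleftrightarrow>
     (\<forall>v. valuation v \<longrightarrow> (\<forall>\<gamma>\<in>\<Gamma>. v \<gamma> \<in> designated) \<longrightarrow> v \<alpha> \<in> designated)"

end

theory Submission
  imports Defs "HOL-Analysis.Function_Topology"
begin

(* Valuations are points of the product space (form => val) with the discrete
   topology on the eight truth values, which is compact by Tychonoff. Each
   condition defining a valuation, making a premise designated, or making the
   conclusion undesignated constrains only finitely many coordinates, so it is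
   closed. If no finite subset of the premises entails the
   conclusion, these closed sets have the finite intersection property, so a
   common point exists: a countermodel for the whole premise set. *)

definition determined_by :: "'a set \<Rightarrow> ('a \<Rightarrow> 'b) set \<Rightarrow> bool" where
  "determined_by X S \<longleftrightarrow> (\<forall>f g. (\<forall>x\<in>X. f x = g x) \<longrightarrow> f \<in> S \<longrightarrow> g \<in> S)"

abbreviation discrete_product_topology :: "('a \<Rightarrow> 'b) topology" where
  "discrete_product_topology \<equiv> product_topology (\<lambda>_. discrete_topology UNIV) UNIV"

lemma topspace_discrete_product_topology [simp]: "topspace discrete_product_topology = UNIV"
  by (simp add: PiE_UNIV_domain)

lemma compact_space_discrete_product_topology:
  "compact_space (discrete_product_topology :: ('a \<Rightarrow> 'b::finite) topology)"
  by (simp add: compact_space_product_topology compact_space_discrete_topology)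

lemma openin_agree_on_finite:
  assumes "finite X"
  shows "openin discrete_product_topology {g. \<forall>x\<in>X. g x = f x}"
proof -
  have "{g. \<forall>x\<in>X. g x = f x} = PiE UNIV (\<lambda>x. if x \<in> X then {f x} else UNIV)"
    by (auto simp: PiE_UNIV_domain split: if_splits)
  moreover have "{x. (if x \<in> X then {f x} else UNIV) \<noteq> UNIV} \<subseteq> X"
    by auto
  ultimately show ?thesis
    using assms by (simp add: openin_PiE_gen finite_subset)
qed

lemma closedin_if_determined_by_finite:
  assumes "finite X" "determined_by X S"
  shows "closedin discrete_product_topology S"
proof -
  have "openin discrete_product_topology (- S)"
  proof (rule openin_subopen[THEN iffD2], intro ballI)
    fix f assume "f \<in> - S"
    with assms(2) have "{g. \<forall>x\<in>X. g x = f x} \<subseteq> - S"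
      unfolding determined_by_def by fastforce
    then show "\<exists>T. openin discrete_product_topology T \<and> f \<in> T \<and> T \<subseteq> - S"
      using openin_agree_on_finite[OF assms(1)] by blast
  qed
  then show ?thesis
    by (simp add: closedin_def Compl_eq_Diff_UNIV)
qed

lemma finitely_determined_fip:
  fixes \<S> :: "('a \<Rightarrow> 'b::finite) set set"
  assumes "\<And>S. S \<in> \<S> \<Longrightarrow> \<exists>X. finite X \<and> determined_by X S"
    and "\<And>\<F>. finite \<F> \<Longrightarrow> \<F> \<subseteq> \<S> \<Longrightarrow> \<Inter>\<F> \<noteq> {}"
  shows "\<Inter>\<S> \<noteq> {}"
  using compact_space_discrete_product_topology[unfolded compact_space_fip] assms
    closedin_if_determined_by_finite by metis

instance base :: finite
proof
  have UNIV_eq: "(UNIV :: base set) = {T, C, F, I}"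
    using base.exhaust by auto
  show "finite (UNIV :: base set)"
    unfolding UNIV_eq by simp
qed

instance val :: finite
proof
  have UNIV_eq: "(UNIV :: val set) = range Pos \<union> range Ngt"
    by (auto intro: val.exhaust)
  show "finite (UNIV :: val set)"
    unfolding UNIV_eq by simp
qed

definition valuation_constraints :: "(form \<Rightarrow> val) set set" where
  "valuation_constraints =
     {{v. v (Neg \<alpha>) \<in> negKm (v \<alpha>)} | \<alpha>. True} \<union>
     {{v. v (Box \<alpha>) \<in> boxKm (v \<alpha>)} | \<alpha>. True} \<union>
     {{v. v (Imp \<alpha> \<beta>) \<in> impKm (v \<alpha>) (v \<beta>)} | \<alpha> \<beta>. True}"

definition countermodel_constraints :: "form set \<Rightarrow> form \<Rightarrow> (form \<Rightarrow> val) set set" where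
  "countermodel_constraints \<Gamma> \<alpha> =
     valuation_constraints \<union> (\<lambda>\<gamma>. {v. v \<gamma> \<in> designated}) ` \<Gamma> \<union> {{v. v \<alpha> \<notin> designated}}"

lemma valuation_iff_constraints: "valuation v \<longleftrightarrow> v \<in> \<Inter> valuation_constraints"
proof
  assume "valuation v"
  then show "v \<in> \<Inter> valuation_constraints"
    by (auto simp: valuation_def valuation_constraints_def)
next
  assume v: "v \<in> \<Inter> valuation_constraints"
  have "v \<in> S" if "S \<in> valuation_constraints" for S
    using v that by blast
  then show "valuation v"
    unfolding valuation_def valuation_constraints_def by blast
qed

lemma consKm_iff_no_countermodel: "\<Gamma> \<Turnstile>Km \<alpha> \<longleftrightarrow> \<Inter> (countermodel_constraints \<Gamma> \<alpha>) = {}"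
  by (auto simp: consKm_def countermodel_constraints_def valuation_iff_constraints)

lemma countermodel_constraints_finitely_determined:
  assumes "S \<in> countermodel_constraints \<Gamma> \<alpha>"
  shows "\<exists>X. finite X \<and> determined_by X S"
  using assms unfolding countermodel_constraints_def valuation_constraints_def
proof (elim UnE imageE CollectE exE; clarify)
  show "\<exists>X. finite X \<and> determined_by X {v. v (Neg \<beta>) \<in> negKm (v \<beta>)}" for \<beta>
    by (rule exI[of _ "{\<beta>, Neg \<beta>}"]) (simp add: determined_by_def)
  show "\<exists>X. finite X \<and> determined_by X {v. v (Box \<beta>) \<in> boxKm (v \<beta>)}" for \<beta>
    by (rule exI[of _ "{\<beta>, Box \<beta>}"]) (simp add: determined_by_def)
  show "\<exists>X. finite X \<and> determined_by X {v. v (Imp \<beta> \<delta>) \<in> impKm (v \<beta>) (v \<delta>)}" for \<beta> \<delta>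
    by (rule exI[of _ "{\<beta>, \<delta>, Imp \<beta> \<delta>}"]) (simp add: determined_by_def)
  show "\<exists>X. finite X \<and> determined_by X {v. v \<gamma> \<in> designated}" for \<gamma>
    by (rule exI[of _ "{\<gamma>}"]) (simp add: determined_by_def)
  show "\<exists>X. finite X \<and> determined_by X {v. v \<alpha> \<notin> designated}"
    by (rule exI[of _ "{\<alpha>}"]) (simp add: determined_by_def)
qed

lemma finite_subfamily_countermodel_constraints:
  assumes "finite \<F>" "\<F> \<subseteq> countermodel_constraints \<Gamma> \<alpha>"
  obtains \<Gamma>0 where "\<Gamma>0 \<subseteq> \<Gamma>" "finite \<Gamma>0" "\<F> \<subseteq> countermodel_constraints \<Gamma>0 \<alpha>"
proof -
  have "finite (\<F> \<inter> (\<lambda>\<gamma>. {v. v \<gamma> \<in> designated}) ` \<Gamma>)"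
    using assms(1) by simp
  then obtain \<Gamma>0 where "\<Gamma>0 \<subseteq> \<Gamma>" "finite \<Gamma>0"
      and \<Gamma>0: "\<F> \<inter> (\<lambda>\<gamma>. {v. v \<gamma> \<in> designated}) ` \<Gamma> = (\<lambda>\<gamma>. {v. v \<gamma> \<in> designated}) ` \<Gamma>0"
    by (meson finite_subset_image inf_le2)
  have "\<F> \<subseteq> countermodel_constraints \<Gamma>0 \<alpha>"
    using assms(2) \<Gamma>0 by (auto simp: countermodel_constraints_def)
  with \<open>\<Gamma>0 \<subseteq> \<Gamma>\<close> \<open>finite \<Gamma>0\<close> show ?thesis
    by (rule that)
qed

theorem mainTheorem18:
  fixes \<Gamma> :: "form set" and \<alpha> :: form
  assumes "\<Gamma> \<Turnstile>Km \<alpha>"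
  shows "\<exists>\<Gamma>0. \<Gamma>0 \<subseteq> \<Gamma> \<and> finite \<Gamma>0 \<and> \<Gamma>0 \<Turnstile>Km \<alpha>"
proof (rule ccontr)
  assume no_finite_premises: "\<not> ?thesis"
  have "\<Inter> (countermodel_constraints \<Gamma> \<alpha>) \<noteq> {}"
  proof (rule finitely_determined_fip)
    fix \<F> assume "finite \<F>" "\<F> \<subseteq> countermodel_constraints \<Gamma> \<alpha>"
    then obtain \<Gamma>0 where "\<Gamma>0 \<subseteq> \<Gamma>" "finite \<Gamma>0" "\<F> \<subseteq> countermodel_constraints \<Gamma>0 \<alpha>"
      by (rule finite_subfamily_countermodel_constraints)
    moreover from no_finite_premises \<open>\<Gamma>0 \<subseteq> \<Gamma>\<close> \<open>finite \<Gamma>0\<close>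
    have "\<Inter> (countermodel_constraints \<Gamma>0 \<alpha>) \<noteq> {}"
      by (auto simp: consKm_iff_no_countermodel)
    ultimately show "\<Inter> \<F> \<noteq> {}"
      by blast
  qed (rule countermodel_constraints_finitely_determined)
  with assms show False
    by (simp add: consKm_iff_no_countermodel)
qed

end
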